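(* Let $(X,d)$ be a complete metric space, let $N\in\mathbb{N}\setminus\{0\}$, let $\alpha:X\times X\rightarrow[0,+\infty)$ be $N$--transitive, and let $T:X\rightarrow X$ be an $\alpha$--contractive mapping of Meir--Keeler type satisfying: (A1) $T$ is $\alpha$--admissible; (A2) there exists $x_{0}\in X$ such that $\alpha(x_{0},Tx_{0})\geq1$; (A3) $T$ is $\alpha$--orbitally continuous. Then $T$ has a fixed point, i.e., there exists $x^{\ast}\in X$ with $Tx^{\ast}=x^{\ast}$.
   Context: $\mathbb{N}$ is the set of non-negative integers; $T^n$ is the $n$-th iterate of $T$. $T$ is an $\alpha$--contractive mapping of Meir--Keeler type if for every $\varepsilon>0$ there exists $\delta(\varepsilon)>0$ such that for all $x,y\in X$: $\varepsilon\leq d(x,y)<\varepsilon+\delta(\varepsilon)$ implies $\alpha(x,y)d(Tx,Ty)<\varepsilon$. $T$ is $\alpha$--admissible if $\alpha(x,y)\geq1$ implies $\alpha(Tx,Ty)\geq1$. $\alpha$ is $N$--transitive if for all $x_0,x_1,\dots,x_{N+1}\in X$ with $\alpha(x_i,x_{i+1})\geq1$ for all $i\in\{0,\dots,N\}$ one has $\alpha(x_0,x_{N+1})\geq1$. A sequence $\{x_n\}$ in $X$ is $(T,\alpha)$--orbital if $x_n=T^nx_0$ and $\alpha(x_n,x_{n+1})\geq1$ for all $n\in\mathbb{N}$. $T$ is $\alpha$--orbitally continuous if for every $(T,\alpha)$--orbital sequence $\{x_n\}$ with $x_n\rightarrow x\in X$ there is a subsequence $\{x_{n(k)}\}$ with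 $Tx_{n(k)}\rightarrow Tx$. *)

theory Defs
  imports "HOL-Analysis.Analysis"
begin

definition alpha_MK_contractive :: "('a::metric_space \<Rightarrow> 'a \<Rightarrow> real) \<Rightarrow> ('a \<Rightarrow> 'a) \<Rightarrow> bool" where
  "alpha_MK_contractive \<alpha> T \<longleftrightarrow>
     (\<forall>\<epsilon>>0. \<exists>\<delta>>0. \<forall>x y. \<epsilon> \<le> dist x y \<and> dist x y < \<epsilon> + \<delta> \<longrightarrow> \<alpha> x y * dist (T x) (T y) < \<epsilon>)"

definition alpha_admissible :: "('a \<Rightarrow> 'a \<Rightarrow> real) \<Rightarrow> ('a \<Rightarrow> 'a) \<Rightarrow> bool" where
  "alpha_admissible \<alpha> T \<longleftrightarrow> (\<forall>x y. \<alpha> x y \<ge> 1 \<longrightarrow> \<alpha> (T x) (T y) \<ge> 1)"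

definition N_transitive :: "nat \<Rightarrow> ('a \<Rightarrow> 'a \<Rightarrow> real) \<Rightarrow> bool" where
  "N_transitive N \<alpha> \<longleftrightarrow>
     (\<forall>xs :: nat \<Rightarrow> 'a. (\<forall>i\<le>N. \<alpha> (xs i) (xs (Suc i)) \<ge> 1) \<longrightarrow> \<alpha> (xs 0) (xs (Suc N)) \<ge> 1)"

definition alpha_orbital :: "('a \<Rightarrow> 'a \<Rightarrow> real) \<Rightarrow> ('a \<Rightarrow> 'a) \<Rightarrow> (nat \<Rightarrow> 'a) \<Rightarrow> bool" where
  "alpha_orbital \<alpha> T x \<longleftrightarrow> (\<forall>n. x n = (T ^^ n) (x 0) \<and> \<alpha> (x n) (x (Suc n)) \<ge> 1)"

definition alpha_orbitally_continuous :: "('a::metric_space \<Rightarrow> 'a \<Rightarrow> real) \<Rightarrow> ('a \<Rightarrow> 'a) \<Rightarrow> bool" where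
  "alpha_orbitally_continuous \<alpha> T \<longleftrightarrow>
     (\<forall>x p. alpha_orbital \<alpha> T x \<and> x \<longlonglongrightarrow> p \<longrightarrow>
        (\<exists>r. strict_mono r \<and> (\<lambda>k. T (x (r k))) \<longlonglongrightarrow> T p))"

end

theory Submission
  imports Defs
begin

text \<open>Along the orbit \<open>x\<^sub>n = T\<^sup>n x\<^sub>0\<close> consecutive points are \<open>\<alpha>\<close>-related by admissibility, so the
  Meir--Keeler condition makes the step lengths decrease to \<open>0\<close>. By \<open>N\<close>-transitivity \<open>x\<^sub>n\<close> is
  also \<open>\<alpha>\<close>-related to every \<open>x\<^bsub>n+kN+1\<^esub>\<close>; once the steps are much shorter than the \<open>\<delta>(\<epsilon>)\<close> of the
  Meir--Keeler condition, an induction on \<open>k\<close> keeps all these points within \<open>\<epsilon> + \<delta>/2\<close> of \<open>x\<^bsub>n+1\<^esub>\<close>,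
  and the remaining points are fewer than \<open>N\<close> short steps away. Hence the orbit is Cauchy, and
  orbital continuity identifies \<open>T\<close> of its limit with the limit.\<close>

lemma alpha_MK_contractive_nonexpansive:
  assumes "alpha_MK_contractive \<alpha> T" and "\<alpha> a b \<ge> 1"
  shows "dist (T a) (T b) \<le> dist a b"
proof (cases "dist a b = 0")
  case False
  then have "dist a b > 0" by simp
  with assms(1) obtain \<delta> where "\<delta> > 0"
    and "\<forall>x y. dist a b \<le> dist x y \<and> dist x y < dist a b + \<delta> \<longrightarrow> \<alpha> x y * dist (T x) (T y) < dist a b"
    unfolding alpha_MK_contractive_def by blast
  then have "\<alpha> a b * dist (T a) (T b) < dist a b" by auto
  moreover have "dist (T a) (T b) \<le> \<alpha> a b * dist (T a) (T b)"
    using assms(2) mult_right_mono[of 1 "\<alpha> a b" "dist (T a) (T b)"] by simp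
  ultimately show ?thesis by linarith
qed simp

lemma alpha_MK_contractiveE:
  assumes "alpha_MK_contractive \<alpha> T" and "\<epsilon> > 0"
  obtains \<delta> where "\<delta> > 0" "\<delta> \<le> \<epsilon>"
    and "\<And>a b. \<alpha> a b \<ge> 1 \<Longrightarrow> dist a b < \<epsilon> + \<delta> \<Longrightarrow> dist (T a) (T b) < \<epsilon>"
proof -
  from assms obtain \<delta> where "\<delta> > 0"
    and H: "\<forall>x y. \<epsilon> \<le> dist x y \<and> dist x y < \<epsilon> + \<delta> \<longrightarrow> \<alpha> x y * dist (T x) (T y) < \<epsilon>"
    unfolding alpha_MK_contractive_def by blast
  have "dist (T a) (T b) < \<epsilon>" if "\<alpha> a b \<ge> 1" "dist a b < \<epsilon> + min \<delta> \<epsilon>" for a b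
  proof (cases "\<epsilon> \<le> dist a b")
    case True
    then have "\<alpha> a b * dist (T a) (T b) < \<epsilon>" using H that(2) by auto
    moreover have "dist (T a) (T b) \<le> \<alpha> a b * dist (T a) (T b)"
      using that(1) mult_right_mono[of 1 "\<alpha> a b" "dist (T a) (T b)"] by simp
    ultimately show ?thesis by linarith
  next
    case False
    then show ?thesis
      using alpha_MK_contractive_nonexpansive[OF assms(1) that(1)] by linarith
  qed
  then show ?thesis using that[of "min \<delta> \<epsilon>"] \<open>\<delta> > 0\<close> assms(2) by auto
qed

lemma alpha_admissible_orbit_orbital:
  assumes "alpha_admissible \<alpha> T" and "\<alpha> x0 (T x0) \<ge> 1"
  shows "alpha_orbital \<alpha> T (\<lambda>n. (T ^^ n) x0)"
proof -
  have "\<alpha> ((T ^^ n) x0) ((T ^^ Suc n) x0) \<ge> 1" for n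
    by (induction n) (use assms in \<open>auto simp: alpha_admissible_def\<close>)
  then show ?thesis by (simp add: alpha_orbital_def)
qed

lemma dist_le_steps:
  fixes x :: "nat \<Rightarrow> 'a::metric_space"
  assumes "\<And>j. j \<ge> a \<Longrightarrow> dist (x (Suc j)) (x j) < \<eta>"
  shows "dist (x a) (x (a + r)) \<le> real r * \<eta>"
proof (induction r)
  case (Suc r)
  have "dist (x a) (x (a + Suc r)) \<le> dist (x a) (x (a + r)) + dist (x (Suc (a + r))) (x (a + r))"
    using dist_triangle[of "x a" "x (Suc (a + r))" "x (a + r)"] by (simp add: dist_commute)
  also have "dist (x (Suc (a + r))) (x (a + r)) < \<eta>" using assms by simp
  finally show ?case using Suc by (simp add: algebra_simps)
qed simp

locale alpha_MK_orbit =
  fixes \<alpha> :: "'a::metric_space \<Rightarrow> 'a \<Rightarrow> real" and T :: "'a \<Rightarrow> 'a" and x :: "nat \<Rightarrow> 'a"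
  assumes MK: "alpha_MK_contractive \<alpha> T"
    and orbit_Suc: "x (Suc n) = T (x n)"
    and alpha_Suc: "\<alpha> (x n) (x (Suc n)) \<ge> 1"
begin

lemma step_dist_Suc_le: "dist (x (Suc (Suc n))) (x (Suc n)) \<le> dist (x (Suc n)) (x n)"
  using alpha_MK_contractive_nonexpansive[OF MK alpha_Suc[of n]]
  by (simp add: orbit_Suc dist_commute)

lemma step_dist_tendsto_zero: "(\<lambda>n. dist (x (Suc n)) (x n)) \<longlonglongrightarrow> 0"
proof -
  let ?d = "\<lambda>n. dist (x (Suc n)) (x n)"
  have "decseq ?d" using step_dist_Suc_le by (simp add: decseq_SucI)
  then obtain L where L: "?d \<longlonglongrightarrow> L" "\<And>n. L \<le> ?d n"
    using decseq_convergent[of ?d 0] zero_le_dist by blast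
  have "L \<ge> 0" using LIMSEQ_le_const[OF L(1), of 0] by simp
  moreover have "\<not> L > 0"
  proof
    assume "L > 0"
    then obtain \<delta> where "\<delta> > 0"
      and contr: "\<And>a b. \<alpha> a b \<ge> 1 \<Longrightarrow> dist a b < L + \<delta> \<Longrightarrow> dist (T a) (T b) < L"
      using alpha_MK_contractiveE[OF MK] by metis
    have "eventually (\<lambda>n. ?d n < L + \<delta>) sequentially"
      using order_tendstoD(2)[OF L(1)] \<open>\<delta> > 0\<close> by simp
    then obtain n where "?d n < L + \<delta>" by (auto simp: eventually_sequentially)
    then have "?d (Suc n) < L"
      using contr[OF alpha_Suc[of n]] by (simp add: orbit_Suc dist_commute)
    with L(2)[of "Suc n"] show False by simp
  qed
  ultimately have "L = 0" by linarith
  with L(1) show ?thesis by simp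
qed

lemma eventually_step_dist_less:
  assumes "\<eta> > 0"
  obtains n where "\<And>j. j \<ge> n \<Longrightarrow> dist (x (Suc j)) (x j) < \<eta>"
  using order_tendstoD(2)[OF step_dist_tendsto_zero assms] by (auto simp: eventually_sequentially)

end

locale alpha_MK_orbit_transitive = alpha_MK_orbit +
  fixes N :: nat
  assumes N_pos: "N \<ge> 1" and transitive: "N_transitive N \<alpha>"
begin

lemma alpha_jump: "\<alpha> (x n) (x (n + k * N + 1)) \<ge> 1"
proof (induction k)
  case (Suc k)
  define xs where "xs = (\<lambda>i. if i = 0 then x n else x (n + k * N + i))"
  have "\<forall>i\<le>N. \<alpha> (xs i) (xs (Suc i)) \<ge> 1"
    using Suc alpha_Suc[of "n + k * N + _"] by (auto simp: xs_def)
  then have "\<alpha> (xs 0) (xs (Suc N)) \<ge> 1"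
    using transitive unfolding N_transitive_def by blast
  then show ?case by (simp add: xs_def algebra_simps)
qed (simp add: alpha_Suc)

lemma jump_dist_bound:
  assumes contr: "\<And>a b. \<alpha> a b \<ge> 1 \<Longrightarrow> dist a b < \<epsilon> + \<delta> \<Longrightarrow> dist (T a) (T b) < \<epsilon>"
    and small: "\<And>j. j \<ge> n \<Longrightarrow> dist (x (Suc j)) (x j) < \<eta>"
    and N_eta: "real N * \<eta> \<le> \<delta> / 2" and "\<epsilon> \<ge> 0"
  shows "dist (x (n + 1)) (x (n + k * N + 2)) < \<epsilon> + \<delta> / 2"
proof -
  have "\<eta> > 0" using small[of n] zero_le_dist[of "x (Suc n)" "x n"] by linarith
  then have "1 * \<eta> \<le> real N * \<eta>" using N_pos by (intro mult_right_mono) auto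
  then have eta_le: "\<eta> \<le> \<delta> / 2" using N_eta by simp
  show ?thesis
  proof (induction k)
    case 0
    show ?case using small[of "Suc n"] eta_le assms(4) by (simp add: numeral_2_eq_2 dist_commute)
  next
    case (Suc k)
    let ?a = "n + k * N + 2" and ?b = "x (n + Suc k * N + 1)"
    have split: "n + Suc k * N + 1 = ?a + (N - 1)" using N_pos by simp
    have tail: "dist (x ?a) ?b \<le> real (N - 1) * \<eta>"
      unfolding split by (rule dist_le_steps) (simp add: small)
    have "dist (x n) ?b \<le> dist (x (Suc n)) (x n) + dist (x (n + 1)) (x ?a) + dist (x ?a) ?b"
      using dist_triangle[of "x n" ?b "x (n + 1)"] dist_triangle[of "x (n + 1)" ?b "x ?a"]
      by (simp add: dist_commute)
    moreover have "real (N - 1) * \<eta> = real N * \<eta> - \<eta>"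
      using N_pos by (simp add: of_nat_diff algebra_simps)
    ultimately have "dist (x n) ?b < \<epsilon> + \<delta>"
      using Suc tail small[of n] N_eta by linarith
    then have "dist (T (x n)) (T ?b) < \<epsilon>" using contr[OF alpha_jump] by blast
    then show ?case using \<open>\<eta> > 0\<close> eta_le by (simp add: orbit_Suc[symmetric] numeral_2_eq_2)
  qed
qed

lemma Cauchy_orbit: "Cauchy x"
  unfolding Cauchy_def
proof (intro allI impI)
  fix e :: real
  assume "e > 0"
  define \<epsilon> where "\<epsilon> = e / 4"
  have "\<epsilon> > 0" using \<open>e > 0\<close> by (simp add: \<epsilon>_def)
  then obtain \<delta> where "\<delta> > 0" "\<delta> \<le> \<epsilon>"
    and contr: "\<And>a b. \<alpha> a b \<ge> 1 \<Longrightarrow> dist a b < \<epsilon> + \<delta> \<Longrightarrow> dist (T a) (T b) < \<epsilon>"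
    using alpha_MK_contractiveE[OF MK] by blast
  define \<eta> where "\<eta> = \<delta> / (2 * real N)"
  have N_eta: "real N * \<eta> = \<delta> / 2" using N_pos by (simp add: \<eta>_def)
  have "\<eta> > 0" using \<open>\<delta> > 0\<close> N_pos by (simp add: \<eta>_def)
  then obtain n where small: "\<And>j. j \<ge> n \<Longrightarrow> dist (x (Suc j)) (x j) < \<eta>"
    using eventually_step_dist_less by blast
  have near: "dist (x (n + 1)) (x m) < 2 * \<epsilon>" if "m \<ge> n + 1" for m
  proof (cases "m = n + 1")
    case False
    define k r where "k = (m - n - 2) div N" and "r = (m - n - 2) mod N"
    have "r < N" using N_pos by (simp add: r_def)
    have m: "m = (n + k * N + 2) + r"
      using False that unfolding k_def r_def by simp
    have "dist (x (n + k * N + 2)) (x m) \<le> real r * \<eta>"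
      using dist_le_steps[where x = x and a = "n + k * N + 2" and r = r] small m by simp
    moreover have "real r * \<eta> \<le> real N * \<eta>" using \<open>r < N\<close> \<open>\<eta> > 0\<close> by simp
    moreover have "dist (x (n + 1)) (x (n + k * N + 2)) < \<epsilon> + \<delta> / 2"
      using jump_dist_bound[OF contr small] N_eta \<open>\<epsilon> > 0\<close> by simp
    ultimately show ?thesis
      using dist_triangle[of "x (n + 1)" "x m" "x (n + k * N + 2)"] N_eta \<open>\<delta> \<le> \<epsilon>\<close> by linarith
  qed (use \<open>\<epsilon> > 0\<close> in simp)
  show "\<exists>M. \<forall>p\<ge>M. \<forall>q\<ge>M. dist (x p) (x q) < e"
  proof (intro exI allI impI)
    fix p q
    assume "p \<ge> n + 1" "q \<ge> n + 1"
    then show "dist (x p) (x q) < e"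
      using near[of p] near[of q] dist_triangle3[of "x p" "x q" "x (n + 1)"]
      by (simp add: \<epsilon>_def)
  qed
qed

end

theorem theorem2:
  fixes T :: "'a::complete_space \<Rightarrow> 'a" and \<alpha> :: "'a \<Rightarrow> 'a \<Rightarrow> real" and N :: nat
  assumes "N \<ge> 1"
    and "\<And>x y. \<alpha> x y \<ge> 0"
    and "N_transitive N \<alpha>"
    and "alpha_MK_contractive \<alpha> T"
    and "alpha_admissible \<alpha> T"
    and "\<exists>x0. \<alpha> x0 (T x0) \<ge> 1"
    and "alpha_orbitally_continuous \<alpha> T"
  shows "\<exists>x. T x = x"
proof -
  obtain x0 where "\<alpha> x0 (T x0) \<ge> 1" using assms(6) by blast
  define x where "x = (\<lambda>n. (T ^^ n) x0)"
  have orbital: "alpha_orbital \<alpha> T x"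
    unfolding x_def by (rule alpha_admissible_orbit_orbital) fact+
  interpret alpha_MK_orbit_transitive \<alpha> T x N
    using assms(1,3,4) orbital by unfold_locales (auto simp: x_def alpha_orbital_def)
  obtain p where p: "x \<longlonglongrightarrow> p"
    using Cauchy_orbit Cauchy_convergent_iff convergent_def by blast
  then obtain r where r: "strict_mono r" "(\<lambda>k. T (x (r k))) \<longlonglongrightarrow> T p"
    using assms(7) orbital unfolding alpha_orbitally_continuous_def by blast
  have "strict_mono (\<lambda>k. Suc (r k))" using r(1) by (simp add: strict_mono_def)
  from LIMSEQ_subseq_LIMSEQ[OF p this] have "(\<lambda>k. T (x (r k))) \<longlonglongrightarrow> p"
    by (simp add: comp_def orbit_Suc)
  with r(2) have "T p = p" using LIMSEQ_unique by blast
  then show ?thesis by blast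
qed

end
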